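(* Let $k$ be an algebraically closed field of characteristic zero and let $A$ be an integral normal $k$-algebra. Then for every nonzero locally nilpotent $k$-derivation $\partial$ of $A$, the Rees algebra $R(A,\partial)$ is integral and normal.
   Context: For a locally nilpotent $k$-derivation $\partial$ of $A$, the Rees algebra is $R(A,\partial)=\bigoplus_{n\geq0}\ker(\partial^{n+1})\,\upsilon^n\subseteq A[\upsilon]$, graded by $n$, with multiplication induced by $A[\upsilon]$. *)

theory Defs
  imports "HOL-Computational_Algebra.Polynomial" "HOL-Computational_Algebra.Fraction_Field"
begin

definition subring_set :: "'a::comm_ring_1 set \<Rightarrow> bool" where
  "subring_set S \<longleftrightarrow> 0 \<in> S \<and> 1 \<in> S \<and>
     (\<forall>a\<in>S. \<forall>b\<in>S. a + b \<in> S \<and> a - b \<in> S \<and> a * b \<in> S)"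

definition subfield_set :: "'a::comm_ring_1 set \<Rightarrow> bool" where
  "subfield_set K \<longleftrightarrow> subring_set K \<and> (\<forall>x\<in>K. x \<noteq> 0 \<longrightarrow> (\<exists>y\<in>K. x * y = 1))"

definition alg_closed_subfield :: "'a::comm_ring_1 set \<Rightarrow> bool" where
  "alg_closed_subfield K \<longleftrightarrow> subfield_set K \<and>
     (\<forall>p::'a poly. (\<forall>i. coeff p i \<in> K) \<and> degree p > 0 \<longrightarrow> (\<exists>x\<in>K. poly p x = 0))"

definition integral_subring :: "'a::comm_ring_1 set \<Rightarrow> bool" where
  "integral_subring S \<longleftrightarrow> subring_set S \<and> (1::'a) \<noteq> 0 \<and>
     (\<forall>a\<in>S. \<forall>b\<in>S. a * b = 0 \<longrightarrow> a = 0 \<or> b = 0)"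

definition frac_field_of :: "'a::idom set \<Rightarrow> 'a fract set" where
  "frac_field_of S = {x. \<exists>a\<in>S. \<exists>b\<in>S. b \<noteq> 0 \<and> x = Fract a b}"

definition integral_over :: "'a::idom set \<Rightarrow> 'a fract \<Rightarrow> bool" where
  "integral_over S x \<longleftrightarrow> (\<exists>p::'a poly. (\<forall>i. coeff p i \<in> S) \<and> lead_coeff p = 1 \<and>
      poly (map_poly (\<lambda>a. Fract a 1) p) x = 0)"

definition normal_subring :: "'a::idom set \<Rightarrow> bool" where
  "normal_subring S \<longleftrightarrow> integral_subring S \<and>
     (\<forall>x\<in>frac_field_of S. integral_over S x \<longrightarrow> x \<in> (\<lambda>a. Fract a 1) ` S)"

definition is_derivation :: "'a::comm_ring_1 set \<Rightarrow> ('a \<Rightarrow> 'a) \<Rightarrow> bool" where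
  "is_derivation K D \<longleftrightarrow> (\<forall>x y. D (x + y) = D x + D y) \<and>
     (\<forall>x y. D (x * y) = x * D y + y * D x) \<and> (\<forall>c\<in>K. \<forall>x. D (c * x) = c * D x)"

definition locally_nilpotent :: "('a::zero \<Rightarrow> 'a) \<Rightarrow> bool" where
  "locally_nilpotent D \<longleftrightarrow> (\<forall>a. \<exists>n. (D ^^ n) a = 0)"

text \<open>Rees algebra R(A,D) = sum_n ker(D^(n+1)) v^n, as a subset of A[v].\<close>
definition rees_algebra :: "('a::comm_ring_1 \<Rightarrow> 'a) \<Rightarrow> 'a poly set" where
  "rees_algebra D = {p. \<forall>n. (D ^^ (Suc n)) (coeff p n) = 0}"

end

(* The Rees algebra R sits inside A[v], which is normal because A is normal and contains Q:
   an element of Frac(A[v]) integral over A[v] lies in Frac(A)[v] since Frac(A)[v] is Euclidean,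
   its values at the integers are integral over A, hence in A, and interpolation then puts its
   coefficients in A. So an element of Frac(R) integral over R is a polynomial h in A[v].
   Let nu(h) be the least e with v^e h in R. By the Leibniz rule and because binomial
   coefficients do not vanish in characteristic 0, nu(f g) = nu(f) + nu(g) whenever both are
   positive. If nu(h) > 0, then in a monic equation h^n + c_(n-1) h^(n-1) + ... + c_0 = 0
   over R the term h^n has nu = n nu(h), exceeding nu of every other term, a contradiction. *)

theory Submission
  imports Defs "HOL-Computational_Algebra.Polynomial_Factorial"
begin

lemma subring_setD:
  assumes "subring_set S"
  shows "0 \<in> S" "1 \<in> S"
    and "a \<in> S \<Longrightarrow> b \<in> S \<Longrightarrow> a + b \<in> S"
    and "a \<in> S \<Longrightarrow> b \<in> S \<Longrightarrow> a - b \<in> S"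
    and "a \<in> S \<Longrightarrow> b \<in> S \<Longrightarrow> a * b \<in> S"
  using assms unfolding subring_set_def by blast+

lemma subring_set_uminus_mem:
  assumes "subring_set S" "x \<in> S"
  shows "- x \<in> S"
  using subring_setD(4)[OF assms(1) subring_setD(1)[OF assms(1)] assms(2)] by simp

lemma subring_set_of_nat_mem: "subring_set S \<Longrightarrow> of_nat n \<in> S"
  by (induction n) (simp_all add: subring_setD)

lemma subfield_set_nat_inverse:
  fixes K :: "'a::{comm_ring_1, ring_char_0} set"
  assumes "subfield_set K" "0 < d"
  shows "\<exists>a. of_nat d * a = (1 :: 'a)"
proof -
  have K: "subring_set K" "\<forall>x\<in>K. x \<noteq> 0 \<longrightarrow> (\<exists>y\<in>K. x * y = 1)"
    using assms(1) unfolding subfield_set_def by blast+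
  have "of_nat d \<in> K"
    by (rule subring_set_of_nat_mem[OF K(1)])
  moreover have "of_nat d \<noteq> (0 :: 'a)"
    using assms(2) by simp
  ultimately show ?thesis
    using K(2) by blast
qed

lemma sum_homogeneous_scale:
  fixes g p q :: "'a::comm_semiring_1"
  shows "(\<Sum>i\<le>n. c i * (g * p) ^ i * (g * q) ^ (n - i)) = g ^ n * (\<Sum>i\<le>n. c i * p ^ i * q ^ (n - i))"
proof -
  have "c i * (g * p) ^ i * (g * q) ^ (n - i) = g ^ n * (c i * p ^ i * q ^ (n - i))" if "i \<le> n" for i
  proof -
    have "c i * (g * p) ^ i * (g * q) ^ (n - i) = (g ^ i * g ^ (n - i)) * (c i * p ^ i * q ^ (n - i))"
      by (simp add: power_mult_distrib mult_ac)
    also have "g ^ i * g ^ (n - i) = g ^ n"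
      using that by (simp flip: power_add)
    finally show ?thesis .
  qed
  then show ?thesis
    by (simp add: sum_distrib_left)
qed

lemma euclidean_bezout:
  fixes x y :: "'a::euclidean_ring"
  shows "\<exists>d a b. d dvd x \<and> d dvd y \<and> d = a * x + b * y"
proof (induction "euclidean_size y" arbitrary: x y rule: less_induct)
  case less
  show ?case
  proof (cases "y = 0")
    case True
    then show ?thesis
      by (intro exI[of _ x] exI[of _ 1] exI[of _ 0]) simp
  next
    case False
    then have "euclidean_size (x mod y) < euclidean_size y"
      by (rule mod_size_less)
    then obtain d a b where d: "d dvd y" "d dvd x mod y" "d = a * y + b * (x mod y)"
      using less.hyps by blast
    have "d dvd x"
      using d(1,2) by (simp add: dvd_mod_iff)
    moreover have "d = b * x + (a - b * (x div y)) * y"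
    proof -
      define t where "t = x div y"
      have "x mod y = x - t * y"
        unfolding t_def by (rule minus_div_mult_eq_mod[symmetric])
      with d(3) show ?thesis
        unfolding t_def[symmetric] by (simp add: algebra_simps)
    qed
    ultimately show ?thesis
      using d(1) by blast
  qed
qed

text \<open>Euclidean domains are integrally closed, in the homogeneous form obtained by
  clearing the denominator of a root \<open>p / q\<close>.\<close>
lemma homogeneous_monic_root_dvd:
  fixes p q :: "'a::euclidean_ring"
  assumes "q \<noteq> 0" and "c n = 1" and root: "(\<Sum>i\<le>n. c i * p ^ i * q ^ (n - i)) = 0"
  shows "q dvd p"
proof -
  obtain d a b where "d dvd p" "d dvd q" and d: "d = a * p + b * q"
    using euclidean_bezout by blast
  then obtain p' q' where p: "p = d * p'" and q: "q = d * q'"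
    by (meson dvdE)
  have "d \<noteq> 0"
    using \<open>q \<noteq> 0\<close> q by auto
  have bezout: "a * p' + b * q' = 1"
  proof -
    have "d * (a * p' + b * q') = d * 1"
      using d unfolding p q by (simp add: algebra_simps)
    then show ?thesis
      using \<open>d \<noteq> 0\<close> by simp
  qed
  have "d ^ n * (\<Sum>i\<le>n. c i * p' ^ i * q' ^ (n - i)) = 0"
    using root unfolding p q sum_homogeneous_scale .
  then have root': "(\<Sum>i\<le>n. c i * p' ^ i * q' ^ (n - i)) = 0"
    using \<open>d \<noteq> 0\<close> by simp
  have "q' dvd p' ^ n"
  proof -
    have "q' dvd c i * p' ^ i * q' ^ (n - i)" if "i < n" for i
      using that by (simp add: Suc_diff_Suc)
    then have "q' dvd (\<Sum>i<n. c i * p' ^ i * q' ^ (n - i))"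
      by (auto intro: dvd_sum)
    moreover have "p' ^ n = - (\<Sum>i<n. c i * p' ^ i * q' ^ (n - i))"
      using root' \<open>c n = 1\<close> by (simp add: lessThan_Suc_atMost[symmetric] eq_neg_iff_add_eq_0 add.commute)
    ultimately show ?thesis
      by simp
  qed
  have "q' dvd 1"
  proof -
    have "q' dvd p' ^ k \<Longrightarrow> q' dvd 1" for k
    proof (induction k)
      case (Suc k)
      have "p' ^ k = p' ^ k * (a * p' + b * q')"
        using bezout by simp
      also have "\<dots> = a * p' ^ Suc k + b * q' * p' ^ k"
        by (simp add: algebra_simps)
      also have "q' dvd \<dots>"
        using Suc.prems by (intro dvd_add) simp_all
      finally show ?case
        by (rule Suc.IH)
    qed simp
    with \<open>q' dvd p' ^ n\<close> show ?thesis
      by blast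
  qed
  then have "q' dvd p'"
    by (rule unit_imp_dvd)
  then show ?thesis
    unfolding p q by (rule mult_dvd_mono[OF dvd_refl])
qed

section \<open>Normality of polynomial rings over normal domains containing \<open>\<rat>\<close>\<close>

text \<open>Divide \<open>f - f(N)\<close> by \<open>X - N\<close> and induct on the degree.\<close>
lemma poly_coeffs_mem_subring_if_nat_values:
  fixes f :: "'a::idom poly"
  assumes S: "subring_set S" and Q: "\<And>d. 0 < d \<Longrightarrow> \<exists>a\<in>S. of_nat d * a = 1"
    and at_nats: "\<And>m. N \<le> m \<Longrightarrow> poly f (of_nat m) \<in> S"
  shows "coeff f i \<in> S"
  using at_nats
proof (induction "degree f" arbitrary: f N i rule: less_induct)
  case less
  define c where "c = poly f (of_nat N)"
  have "c \<in> S"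
    unfolding c_def by (rule less.prems) simp
  show ?case
  proof (cases "degree f = 0")
    case True
    then show ?thesis
      using \<open>c \<in> S\<close> subring_setD(1)[OF S] by (cases i) (simp_all add: c_def poly_altdef coeff_eq_0)
  next
    case False
    have "poly (f - [:c:]) (of_nat N) = 0"
      by (simp add: c_def)
    then obtain h where h: "f - [:c:] = [:- of_nat N, 1:] * h"
      using poly_eq_0_iff_dvd by blast
    then have f: "f = [:c:] + smult (- of_nat N) h + pCons 0 h"
      by (simp add: algebra_simps)
    have "h \<noteq> 0"
      using False h by (auto simp: algebra_simps)
    have "degree (f - [:c:]) = degree f"
      using False degree_add_eq_left[of "- [:c:]" f] by (simp add: diff_conv_add_uminus del: add_uminus_conv_diff)
    then have "degree f = degree ([:- of_nat N, 1:] * h)"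
      by (simp only: h)
    also have "\<dots> = Suc (degree h)"
      using \<open>h \<noteq> 0\<close> degree_mult_eq[of "[:- of_nat N, 1:]" h] by simp
    finally have "degree h < degree f"
      by simp
    moreover have "poly h (of_nat m) \<in> S" if "Suc N \<le> m" for m
    proof -
      have "0 < m - N"
        using that by simp
      then obtain a where "a \<in> S" and a: "of_nat (m - N) * a = 1"
        using Q by blast
      have "poly f (of_nat m) - c = of_nat (m - N) * poly h (of_nat m)"
        using that by (simp add: f algebra_simps)
      then have "poly h (of_nat m) = a * (poly f (of_nat m) - c)"
        using a by (simp add: algebra_simps)
      also have "\<dots> \<in> S"
        using that less.prems[of m] \<open>a \<in> S\<close> \<open>c \<in> S\<close> by (simp add: subring_setD[OF S])
      finally show ?thesis .
    qed
    ultimately have "coeff h j \<in> S" for j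
      using less.hyps by blast
    then show ?thesis
      using \<open>c \<in> S\<close> subring_set_of_nat_mem[OF S, of N] S
      by (cases i) (simp_all add: f subring_setD subring_set_uminus_mem)
  qed
qed

lemma Fract_1_eq_to_fract: "(\<lambda>a. Fract a 1) = to_fract"
  by (simp add: fun_eq_iff to_fract_def)

lemma to_fract_power: "to_fract (x ^ n) = to_fract x ^ n"
  by (induction n) simp_all

lemma to_fract_of_nat: "to_fract (of_nat m) = of_nat m"
  by (simp add: to_fract_def of_nat_fract)

lemma fract_poly_power: "fract_poly (p ^ n) = fract_poly p ^ n"
  by (induction n) (simp_all del: fract_poly_eq_iff)

lemma fract_poly_sum: "fract_poly (sum f A) = (\<Sum>i\<in>A. fract_poly (f i))"
  by (induction A rule: infinite_finite_induct) (simp_all del: fract_poly_eq_iff)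

lemma poly_fract_poly: "poly (fract_poly p) (to_fract x) = to_fract (poly p x)"
  by (induction p) (simp_all add: map_poly_pCons)

lemma mem_frac_field_of_UNIV: "x \<in> frac_field_of UNIV"
  unfolding frac_field_of_def by (cases x) auto

lemma integral_over_mono: "S \<subseteq> T \<Longrightarrow> integral_over S x \<Longrightarrow> integral_over T x"
  unfolding integral_over_def by blast

lemma integral_over_to_fract_iff:
  "integral_over S (to_fract h) \<longleftrightarrow> (\<exists>P. (\<forall>i. coeff P i \<in> S) \<and> lead_coeff P = 1 \<and> poly P h = 0)"
  unfolding integral_over_def Fract_1_eq_to_fract poly_fract_poly by simp

lemma integral_overE:
  assumes "integral_over S x"
  obtains n c where "c n = 1" "\<And>i. c i \<in> S" "(\<Sum>i\<le>n. to_fract (c i) * x ^ i) = 0"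
proof -
  obtain P where P: "\<forall>i. coeff P i \<in> S" "lead_coeff P = 1" "poly (fract_poly P) x = 0"
    using assms unfolding integral_over_def Fract_1_eq_to_fract by blast
  have "poly (fract_poly P) x = (\<Sum>i\<le>degree P. to_fract (coeff P i) * x ^ i)"
    by (simp add: poly_altdef degree_map_poly coeff_map_poly)
  then show ?thesis
    using that[of "coeff P" "degree P"] P by simp
qed

lemma integral_overI:
  assumes "0 \<in> S" "c n = 1" "\<And>i. c i \<in> S" "(\<Sum>i\<le>n. to_fract (c i) * x ^ i) = 0"
  shows "integral_over S x"
proof -
  define P where "P = (\<Sum>i\<le>n. monom (c i) i)"
  have coeff_P: "coeff P i = (if i \<le> n then c i else 0)" for i
    by (simp add: P_def coeff_sum)
  have "degree P = n"
    by (rule antisym) (simp_all add: degree_le le_degree coeff_P assms(2))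
  then have "poly (fract_poly P) x = (\<Sum>i\<le>n. to_fract (c i) * x ^ i)"
    by (simp add: poly_altdef degree_map_poly coeff_map_poly coeff_P)
  then show ?thesis
    unfolding integral_over_def Fract_1_eq_to_fract
    using assms \<open>degree P = n\<close> by (intro exI[of _ P]) (simp add: coeff_P)
qed

lemma Fract_root_homogeneous:
  assumes "q \<noteq> 0" and root: "(\<Sum>i\<le>n. to_fract (c i) * Fract p q ^ i) = 0"
  shows "(\<Sum>i\<le>n. c i * p ^ i * q ^ (n - i)) = 0"
proof -
  have p: "to_fract p = to_fract q * Fract p q"
    using assms(1) by (simp add: Fract_conv_to_fract)
  have "to_fract (\<Sum>i\<le>n. c i * p ^ i * q ^ (n - i))
      = (\<Sum>i\<le>n. to_fract (c i) * (to_fract q * Fract p q) ^ i * (to_fract q * 1) ^ (n - i))"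
    by (simp add: to_fract_power p)
  also have "\<dots> = to_fract q ^ n * (\<Sum>i\<le>n. to_fract (c i) * Fract p q ^ i * 1 ^ (n - i))"
    by (rule sum_homogeneous_scale)
  also have "\<dots> = 0"
    using root by simp
  finally show ?thesis
    by (simp only: to_fract_eq_0_iff)
qed

lemma normal_monic_root_in_range:
  fixes c :: "nat \<Rightarrow> 'a::idom"
  assumes "normal_subring (UNIV :: 'a set)" "c n = 1"
    and "(\<Sum>i\<le>n. to_fract (c i) * y ^ i) = 0"
  shows "y \<in> range to_fract"
proof -
  have "integral_over UNIV y"
    using integral_overI[of UNIV c n y] assms(2,3) by simp
  then show ?thesis
    using assms(1) mem_frac_field_of_UNIV[of y]
    unfolding normal_subring_def Fract_1_eq_to_fract by blast
qed

text \<open>The values of \<open>f\<close> at integers are integral over \<open>A\<close>, hence lie in \<open>A\<close>; as \<open>\<rat> \<subseteq> A\<close>,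
  interpolation puts the coefficients of \<open>f\<close> in \<open>A\<close> as well.\<close>
lemma fract_poly_monic_root_in_range:
  fixes c :: "nat \<Rightarrow> 'a::idom poly" and f :: "'a fract poly"
  assumes normal: "normal_subring (UNIV :: 'a set)"
    and Q: "\<And>d. 0 < d \<Longrightarrow> \<exists>a::'a. of_nat d * a = 1"
    and "c n = 1" and root: "(\<Sum>i\<le>n. fract_poly (c i) * f ^ i) = 0"
  shows "f \<in> range fract_poly"
proof -
  have S: "subring_set (range (to_fract :: 'a \<Rightarrow> 'a fract))"
    unfolding subring_set_def
    by (auto simp flip: to_fract_0 to_fract_1 to_fract_add to_fract_diff to_fract_mult)
  have "\<exists>b\<in>range to_fract. of_nat d * b = (1 :: 'a fract)" if d: "0 < d" for d
  proof -
    obtain a :: 'a where "of_nat d * a = 1"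
      using Q[OF d] by blast
    then have "to_fract (of_nat d * a) = to_fract 1"
      by (rule arg_cong)
    then have "of_nat d * to_fract a = 1"
      by (simp add: to_fract_of_nat)
    then show ?thesis
      by blast
  qed
  moreover have "poly f (of_nat m) \<in> range to_fract" for m
  proof -
    have "poly (\<Sum>i\<le>n. fract_poly (c i) * f ^ i) (of_nat m) = 0"
      using root by simp
    then have "(\<Sum>i\<le>n. to_fract (poly (c i) (of_nat m)) * poly f (of_nat m) ^ i) = 0"
      by (simp add: poly_sum poly_fract_poly flip: to_fract_of_nat)
    then show ?thesis
      using normal_monic_root_in_range[OF normal, of "\<lambda>i. poly (c i) (of_nat m)" n] \<open>c n = 1\<close>
      by simp
  qed
  ultimately have "coeff f i \<in> range to_fract" for i
    using poly_coeffs_mem_subring_if_nat_values[OF S] by blast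
  moreover have "inv to_fract (0 :: 'a fract) = 0"
    using inv_f_f[of to_fract 0] by (simp add: inj_def)
  ultimately have "fract_poly (map_poly (inv to_fract) f) = f"
    by (intro poly_eqI) (simp add: coeff_map_poly f_inv_into_f)
  then show ?thesis
    by (rule range_eqI[OF sym])
qed

lemma normal_subring_poly:
  assumes normal: "normal_subring (UNIV :: 'a::idom set)"
    and Q: "\<And>d. 0 < d \<Longrightarrow> \<exists>a::'a. of_nat d * a = 1"
  shows "normal_subring (UNIV :: 'a poly set)"
  unfolding normal_subring_def
proof (intro conjI ballI impI)
  show "integral_subring (UNIV :: 'a poly set)"
    by (simp add: integral_subring_def subring_set_def)
next
  fix x :: "'a poly fract"
  assume "integral_over UNIV x"
  then obtain n c where "c n = 1" and root: "(\<Sum>i\<le>n. to_fract (c i) * x ^ i) = 0"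
    by (rule integral_overE)
  obtain p q where "q \<noteq> 0" and x: "x = Fract p q"
    by (cases x) blast
  have "(\<Sum>i\<le>n. c i * p ^ i * q ^ (n - i)) = 0"
    using Fract_root_homogeneous[OF \<open>q \<noteq> 0\<close>] root x by blast
  then have root_fract: "(\<Sum>i\<le>n. fract_poly (c i) * fract_poly p ^ i * fract_poly q ^ (n - i)) = 0"
    using fract_poly_sum[of "\<lambda>i. c i * p ^ i * q ^ (n - i)" "{..n}"]
    by (simp add: fract_poly_power del: fract_poly_eq_iff)
  then have "fract_poly q dvd fract_poly p"
    using \<open>q \<noteq> 0\<close> \<open>c n = 1\<close> by (intro homogeneous_monic_root_dvd) simp_all
  then obtain f where pf: "fract_poly p = fract_poly q * f"
    by blast
  have "fract_poly q ^ n * (\<Sum>i\<le>n. fract_poly (c i) * f ^ i * 1 ^ (n - i)) = 0"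
    using root_fract unfolding pf sum_homogeneous_scale[symmetric] by simp
  then have "(\<Sum>i\<le>n. fract_poly (c i) * f ^ i) = 0"
    using \<open>q \<noteq> 0\<close> by simp
  then obtain h where "f = fract_poly h"
    using fract_poly_monic_root_in_range[where c = c and n = n and f = f] normal Q \<open>c n = 1\<close> by blast
  with pf have "p = q * h"
    by (simp flip: fract_poly_mult)
  then show "x \<in> (\<lambda>a. Fract a 1) ` UNIV"
    using x \<open>q \<noteq> 0\<close> by (simp add: eq_fract)
qed

lemma normal_subring_if_integrally_closed:
  fixes S :: "'a::idom set"
  assumes "normal_subring (UNIV :: 'a set)" "subring_set S"
    and closed: "\<And>h. integral_over S (to_fract h) \<Longrightarrow> h \<in> S"
  shows "normal_subring S"
  unfolding normal_subring_def
proof (intro conjI ballI impI)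
  show "integral_subring S"
    using assms(2) by (simp add: integral_subring_def)
next
  fix x
  assume "integral_over S x"
  moreover from this have "x \<in> range to_fract"
    using assms(1) integral_over_mono[of S UNIV] mem_frac_field_of_UNIV
    unfolding normal_subring_def Fract_1_eq_to_fract by blast
  ultimately show "x \<in> (\<lambda>a. Fract a 1) ` S"
    unfolding Fract_1_eq_to_fract using closed by blast
qed

section \<open>Iterated derivations\<close>

lemma pascal_sum:
  fixes x y :: "nat \<Rightarrow> 'a::comm_semiring_1"
  shows "(\<Sum>k\<le>n. of_nat (n choose k) * x (Suc k) * y (n - k))
       + (\<Sum>k\<le>n. of_nat (n choose k) * x k * y (Suc n - k))
       = (\<Sum>k\<le>Suc n. of_nat (Suc n choose k) * x k * y (Suc n - k))"
proof -
  have "(\<Sum>k\<le>n. of_nat (n choose k) * x k * y (Suc n - k))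
      = (\<Sum>k\<le>Suc n. of_nat (n choose k) * x k * y (Suc n - k))"
    by (simp add: binomial_eq_0)
  also have "\<dots> = x 0 * y (Suc n) + (\<Sum>k\<le>n. of_nat (n choose Suc k) * x (Suc k) * y (n - k))"
    by (subst sum.atMost_Suc_shift) simp
  finally have shift_left: "(\<Sum>k\<le>n. of_nat (n choose k) * x k * y (Suc n - k))
      = x 0 * y (Suc n) + (\<Sum>k\<le>n. of_nat (n choose Suc k) * x (Suc k) * y (n - k))" .
  have shift_right: "(\<Sum>k\<le>Suc n. of_nat (Suc n choose k) * x k * y (Suc n - k))
      = x 0 * y (Suc n) + (\<Sum>k\<le>n. of_nat (Suc n choose Suc k) * x (Suc k) * y (n - k))"
    by (subst sum.atMost_Suc_shift) simp
  show ?thesis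
    unfolding shift_left shift_right by (simp add: algebra_simps sum.distrib)
qed

locale derivation = additive D for D :: "'a::comm_ring_1 \<Rightarrow> 'a" +
  assumes leibniz: "D (x * y) = x * D y + y * D x"
begin

lemma additive_funpow: "additive (D ^^ n)"
  by (induction n) (simp_all add: additive_def add)

lemma funpow_zero [simp]: "(D ^^ n) 0 = 0"
  by (rule additive.zero[OF additive_funpow])

lemma funpow_eq_0_mono:
  assumes "(D ^^ m) x = 0" "m \<le> k"
  shows "(D ^^ k) x = 0"
proof -
  have "D ^^ k = D ^^ (k - m) \<circ> D ^^ m"
    using assms(2) by (simp flip: funpow_add)
  then show ?thesis
    using assms(1) by simp
qed

lemma one [simp]: "D 1 = 0"
  using leibniz[of 1 1] by simp

lemma of_nat [simp]: "D (of_nat m) = 0"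
  by (induction m) (simp_all add: add zero)

lemma funpow_leibniz:
  "(D ^^ n) (a * b) = (\<Sum>k\<le>n. of_nat (n choose k) * (D ^^ k) a * (D ^^ (n - k)) b)"
proof (induction n)
  case 0
  then show ?case by simp
next
  case (Suc n)
  have "(D ^^ Suc n) (a * b) = (\<Sum>k\<le>n. D (of_nat (n choose k) * ((D ^^ k) a * (D ^^ (n - k)) b)))"
    by (simp add: Suc.IH sum mult.assoc)
  also have "\<dots> = (\<Sum>k\<le>n. of_nat (n choose k) * (D ^^ Suc k) a * (D ^^ (n - k)) b)
                 + (\<Sum>k\<le>n. of_nat (n choose k) * (D ^^ k) a * (D ^^ Suc (n - k)) b)"
    by (simp add: leibniz algebra_simps sum.distrib)
  also have "\<dots> = (\<Sum>k\<le>Suc n. of_nat (Suc n choose k) * (D ^^ k) a * (D ^^ (Suc n - k)) b)"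
    using pascal_sum[of n "\<lambda>k. (D ^^ k) a" "\<lambda>k. (D ^^ k) b"] by (simp add: Suc_diff_le)
  finally show ?case .
qed

lemma funpow_mult_eq_0:
  assumes "(D ^^ Suc p) a = 0" "(D ^^ Suc q) b = 0"
  shows "(D ^^ Suc (p + q)) (a * b) = 0"
proof -
  have "(D ^^ k) a * (D ^^ (Suc (p + q) - k)) b = 0" for k
  proof (cases "Suc p \<le> k")
    case True
    then show ?thesis
      using funpow_eq_0_mono[OF assms(1)] by simp
  next
    case False
    then show ?thesis
      using funpow_eq_0_mono[OF assms(2)] by simp
  qed
  then show ?thesis
    unfolding funpow_leibniz by (simp add: mult.assoc)
qed

lemma funpow_mult_top:
  assumes "(D ^^ Suc p) a = 0" "(D ^^ Suc q) b = 0"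
  shows "(D ^^ (p + q)) (a * b) = of_nat ((p + q) choose p) * (D ^^ p) a * (D ^^ q) b"
proof -
  have "of_nat ((p + q) choose k) * (D ^^ k) a * (D ^^ (p + q - k)) b = 0" if "k \<noteq> p" for k
  proof (cases "Suc p \<le> k")
    case True
    then show ?thesis
      using funpow_eq_0_mono[OF assms(1)] by simp
  next
    case False
    then show ?thesis
      using that funpow_eq_0_mono[OF assms(2)] by simp
  qed
  then show ?thesis
    unfolding funpow_leibniz by (subst sum.remove[of _ p]) simp_all
qed

end

section \<open>The Rees filtration\<close>

text \<open>\<open>f \<in> rees_level D e\<close> iff \<open>\<upsilon>\<^sup>e f \<in> R(A, D)\<close>; the least such \<open>e\<close> measures how far
  \<open>f \<in> A[\<upsilon>]\<close> is from the Rees algebra, and it is additive on products (see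
  \<open>mult_not_mem_rees_level\<close>), which is what makes the Rees algebra integrally closed in \<open>A[\<upsilon>]\<close>.\<close>
definition rees_level :: "('a::comm_ring_1 \<Rightarrow> 'a) \<Rightarrow> nat \<Rightarrow> 'a poly set" where
  "rees_level D e = {f. \<forall>k. (D ^^ Suc (k + e)) (coeff f k) = 0}"

lemma rees_algebra_eq_rees_level_0: "rees_algebra D = rees_level D 0"
  by (simp add: rees_algebra_def rees_level_def)

context derivation
begin

context
  notes funpow.simps(2) [simp del]
begin

lemma rees_level_mono: "f \<in> rees_level D e \<Longrightarrow> e \<le> e' \<Longrightarrow> f \<in> rees_level D e'"
  unfolding rees_level_def by (auto intro: funpow_eq_0_mono)

lemma zero_mem_rees_level: "0 \<in> rees_level D e"
  by (simp add: rees_level_def)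

lemma one_mem_rees_level: "1 \<in> rees_level D e"
proof -
  have "(D ^^ Suc 0) 1 = 0"
    by (simp add: funpow.simps(2))
  then show ?thesis
    unfolding rees_level_def using funpow_eq_0_mono by simp
qed

lemma add_mem_rees_level: "f \<in> rees_level D e \<Longrightarrow> g \<in> rees_level D e \<Longrightarrow> f + g \<in> rees_level D e"
  by (simp add: rees_level_def additive.add[OF additive_funpow])

lemma uminus_mem_rees_level: "f \<in> rees_level D e \<Longrightarrow> - f \<in> rees_level D e"
  by (simp add: rees_level_def additive.minus[OF additive_funpow])

lemma sum_mem_rees_level: "(\<And>i. i \<in> A \<Longrightarrow> f i \<in> rees_level D e) \<Longrightarrow> sum f A \<in> rees_level D e"
  by (induction A rule: infinite_finite_induct) (simp_all add: zero_mem_rees_level add_mem_rees_level)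

lemma mult_mem_rees_level:
  assumes f: "f \<in> rees_level D a" and g: "g \<in> rees_level D b"
  shows "f * g \<in> rees_level D (a + b)"
  unfolding rees_level_def
proof (intro CollectI allI)
  fix k
  have "(D ^^ Suc (k + (a + b))) (coeff f i * coeff g (k - i)) = 0" if "i \<le> k" for i
  proof -
    have "(D ^^ Suc (i + a)) (coeff f i) = 0" "(D ^^ Suc (k - i + b)) (coeff g (k - i)) = 0"
      using f g by (simp_all add: rees_level_def)
    then have "(D ^^ Suc (i + a + (k - i + b))) (coeff f i * coeff g (k - i)) = 0"
      by (rule funpow_mult_eq_0)
    with that show ?thesis
      by (simp add: add_ac)
  qed
  then show "(D ^^ Suc (k + (a + b))) (coeff (f * g) k) = 0"
    by (simp add: coeff_mult additive.sum[OF additive_funpow])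
qed

lemma power_mem_rees_level: "f \<in> rees_level D e \<Longrightarrow> f ^ j \<in> rees_level D (j * e)"
  by (induction j) (simp_all add: one_mem_rees_level mult_mem_rees_level)

lemma rees_level_exists:
  assumes "locally_nilpotent D"
  shows "\<exists>e. f \<in> rees_level D e"
proof (induction f)
  case 0
  then show ?case
    using zero_mem_rees_level by blast
next
  case (pCons a f)
  then obtain e where e: "f \<in> rees_level D e"
    by blast
  obtain n where n: "(D ^^ n) a = 0"
    using assms unfolding locally_nilpotent_def by blast
  have "pCons a f \<in> rees_level D (max e n)"
    unfolding rees_level_def
  proof (intro CollectI allI)
    fix k
    show "(D ^^ Suc (k + max e n)) (coeff (pCons a f) k) = 0"
    proof (cases k)
      case 0
      then show ?thesis
        using funpow_eq_0_mono[OF n] by simp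
    next
      case (Suc j)
      have "(D ^^ Suc (j + e)) (coeff f j) = 0"
        using e by (simp add: rees_level_def)
      then show ?thesis
        using Suc by (auto intro: funpow_eq_0_mono)
    qed
  qed
  then show ?case
    by blast
qed

lemma subring_set_rees_algebra: "subring_set (rees_algebra D)"
  using mult_mem_rees_level[of _ 0 _ 0]
  unfolding subring_set_def rees_algebra_eq_rees_level_0
  by (simp add: zero_mem_rees_level one_mem_rees_level add_mem_rees_level
      add_mem_rees_level[OF _ uminus_mem_rees_level, simplified])

end

end

locale char_0_derivation = derivation D for D :: "'a::{idom, ring_char_0} \<Rightarrow> 'a"
begin

context
  notes funpow.simps(2) [simp del]
begin

lemma funpow_mult_top_neq_0:
  assumes "(D ^^ Suc p) a = 0" "(D ^^ Suc q) b = 0" "(D ^^ p) a \<noteq> 0" "(D ^^ q) b \<noteq> 0"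
  shows "(D ^^ (p + q)) (a * b) \<noteq> 0"
  using funpow_mult_top[OF assms(1,2)] assms(3,4) by simp

text \<open>Gauss' lemma for the Rees filtration: the coefficients of lowest index \<open>i\<^sub>0\<close>, \<open>j\<^sub>0\<close>
  that violate the smaller levels contribute the only nonvanishing term of
  \<open>D\<^bsup>i\<^sub>0+j\<^sub>0+a+b+2\<^esup>\<close> applied to the coefficient of index \<open>i\<^sub>0 + j\<^sub>0\<close> of the product.\<close>
lemma mult_not_mem_rees_level:
  assumes f: "f \<in> rees_level D (Suc a)" "f \<notin> rees_level D a"
    and g: "g \<in> rees_level D (Suc b)" "g \<notin> rees_level D b"
  shows "f * g \<notin> rees_level D (Suc (a + b))"
proof -
  define P where "P k \<longleftrightarrow> (D ^^ Suc (k + a)) (coeff f k) \<noteq> 0" for k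
  define Q where "Q k \<longleftrightarrow> (D ^^ Suc (k + b)) (coeff g k) \<noteq> 0" for k
  define i\<^sub>0 where "i\<^sub>0 = (LEAST k. P k)"
  define j\<^sub>0 where "j\<^sub>0 = (LEAST k. Q k)"
  have "\<exists>k. P k" "\<exists>k. Q k"
    using f(2) g(2) by (auto simp: P_def Q_def rees_level_def)
  then have "P i\<^sub>0" "Q j\<^sub>0"
    unfolding i\<^sub>0_def j\<^sub>0_def by (auto intro: LeastI_ex)
  have below_i\<^sub>0: "(D ^^ Suc (i + a)) (coeff f i) = 0" if "i < i\<^sub>0" for i
    using not_less_Least[OF that[unfolded i\<^sub>0_def]] by (simp add: P_def)
  have below_j\<^sub>0: "(D ^^ Suc (j + b)) (coeff g j) = 0" if "j < j\<^sub>0" for j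
    using not_less_Least[OF that[unfolded j\<^sub>0_def]] by (simp add: Q_def)
  have f_Suc: "(D ^^ Suc (i + Suc a)) (coeff f i) = 0" for i
    using f(1) by (simp add: rees_level_def)
  have g_Suc: "(D ^^ Suc (j + Suc b)) (coeff g j) = 0" for j
    using g(1) by (simp add: rees_level_def)
  define N where "N = i\<^sub>0 + j\<^sub>0"
  define M where "M = Suc (N + Suc (a + b))"
  have other_terms: "(D ^^ M) (coeff f i * coeff g (N - i)) = 0" if "i \<le> N" "i \<noteq> i\<^sub>0" for i
  proof (cases "i < i\<^sub>0")
    case True
    have "(D ^^ Suc (i + a + (N - i + Suc b))) (coeff f i * coeff g (N - i)) = 0"
      by (rule funpow_mult_eq_0[OF below_i\<^sub>0[OF True] g_Suc])
    with that show ?thesis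
      by (simp add: M_def add_ac)
  next
    case False
    then have "N - i < j\<^sub>0"
      using that by (simp add: N_def)
    have "(D ^^ Suc (i + Suc a + (N - i + b))) (coeff f i * coeff g (N - i)) = 0"
      by (rule funpow_mult_eq_0[OF f_Suc below_j\<^sub>0[OF \<open>N - i < j\<^sub>0\<close>]])
    with that show ?thesis
      by (simp add: M_def add_ac)
  qed
  have "(D ^^ (i\<^sub>0 + Suc a + (j\<^sub>0 + Suc b))) (coeff f i\<^sub>0 * coeff g j\<^sub>0) \<noteq> 0"
    using funpow_mult_top_neq_0[OF f_Suc g_Suc] \<open>P i\<^sub>0\<close> \<open>Q j\<^sub>0\<close> by (simp add: P_def Q_def)
  then have main_term: "(D ^^ M) (coeff f i\<^sub>0 * coeff g (N - i\<^sub>0)) \<noteq> 0"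
    by (simp add: M_def N_def add_ac)
  have "(D ^^ M) (coeff (f * g) N) = (\<Sum>i\<le>N. (D ^^ M) (coeff f i * coeff g (N - i)))"
    by (simp add: coeff_mult additive.sum[OF additive_funpow])
  also have "\<dots> = (D ^^ M) (coeff f i\<^sub>0 * coeff g (N - i\<^sub>0))"
    using other_terms by (subst sum.remove[of _ i\<^sub>0]) (simp_all add: N_def)
  finally have "(D ^^ M) (coeff (f * g) N) \<noteq> 0"
    using main_term by simp
  then show ?thesis
    unfolding rees_level_def M_def by auto
qed

lemma power_not_mem_rees_level:
  assumes "h \<in> rees_level D (Suc e)" "h \<notin> rees_level D e"
  shows "h ^ Suc j \<notin> rees_level D (j * Suc e + e)"
proof (induction j)
  case 0
  then show ?case
    using assms(2) by simp
next
  case (Suc j)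
  have "h ^ Suc j \<in> rees_level D (Suc j * Suc e)"
    by (rule power_mem_rees_level[OF assms(1)])
  moreover have "Suc j * Suc e = Suc (j * Suc e + e)"
    by simp
  ultimately have "h ^ Suc j \<in> rees_level D (Suc (j * Suc e + e))"
    by metis
  then have "h * h ^ Suc j \<notin> rees_level D (Suc (e + (j * Suc e + e)))"
    using mult_not_mem_rees_level[OF assms] Suc.IH by blast
  moreover have "Suc (e + (j * Suc e + e)) = Suc j * Suc e + e"
    by simp
  ultimately show ?case
    by (metis power_Suc)
qed

end

lemma rees_algebra_integrally_closed:
  assumes "locally_nilpotent D" and "integral_over (rees_algebra D) (to_fract h)"
  shows "h \<in> rees_algebra D"
proof (rule ccontr)
  assume "h \<notin> rees_algebra D"
  obtain P where P: "\<And>i. coeff P i \<in> rees_level D 0" "lead_coeff P = 1" "poly P h = 0"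
    using assms(2) unfolding integral_over_to_fract_iff rees_algebra_eq_rees_level_0 by blast
  define e\<^sub>0 where "e\<^sub>0 = (LEAST e. h \<in> rees_level D e)"
  have "h \<in> rees_level D e\<^sub>0"
    unfolding e\<^sub>0_def using rees_level_exists[OF assms(1)] by (rule LeastI_ex)
  moreover from this have "e\<^sub>0 \<noteq> 0"
    using \<open>h \<notin> rees_algebra D\<close> by (intro notI) (simp add: rees_algebra_eq_rees_level_0)
  then obtain e where "e\<^sub>0 = Suc e"
    using not0_implies_Suc by blast
  ultimately have h: "h \<in> rees_level D (Suc e)" "h \<notin> rees_level D e"
    using not_less_Least[of e "\<lambda>e. h \<in> rees_level D e"] by (simp_all add: e\<^sub>0_def)
  have "degree P \<noteq> 0"
  proof
    assume "degree P = 0"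
    then have "poly P h = 1"
      using P(2) by (simp add: poly_altdef)
    with P(3) show False
      by simp
  qed
  then obtain m where m: "degree P = Suc m"
    using not0_implies_Suc by blast
  have "0 = (\<Sum>i\<le>m. coeff P i * h ^ i) + h ^ Suc m"
    using P(2,3) by (simp add: poly_altdef m)
  then have "h ^ Suc m = - (\<Sum>i\<le>m. coeff P i * h ^ i)"
    by (simp add: eq_neg_iff_add_eq_0 add.commute)
  moreover have "(\<Sum>i\<le>m. coeff P i * h ^ i) \<in> rees_level D (m * Suc e + e)"
  proof (rule sum_mem_rees_level)
    fix i
    assume "i \<in> {..m}"
    have "coeff P i * h ^ i \<in> rees_level D (0 + i * Suc e)"
      by (rule mult_mem_rees_level[OF P(1) power_mem_rees_level[OF h(1)]])
    then show "coeff P i * h ^ i \<in> rees_level D (m * Suc e + e)"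
      by (rule rees_level_mono) (use \<open>i \<in> {..m}\<close> mult_le_mono1[of i m "Suc e"] in simp)
  qed
  ultimately have "h ^ Suc m \<in> rees_level D (m * Suc e + e)"
    by (simp add: uminus_mem_rees_level)
  with power_not_mem_rees_level[OF h] show False
    by blast
qed

end

theorem corollary2p5:
  fixes K :: "'a::{idom, ring_char_0} set" and D :: "'a \<Rightarrow> 'a"
  assumes "alg_closed_subfield K"
    and "normal_subring (UNIV :: 'a set)"
    and "is_derivation K D"
    and "locally_nilpotent D"
    and "\<exists>a. D a \<noteq> 0"
  shows "integral_subring (rees_algebra D) \<and> normal_subring (rees_algebra D)"
proof -
  interpret char_0_derivation D
    using assms(3) by unfold_locales (simp_all add: is_derivation_def)
  have Q: "\<exists>a::'a. of_nat d * a = 1" if "0 < d" for d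
    using assms(1) subfield_set_nat_inverse[OF _ that] unfolding alg_closed_subfield_def by blast
  have "normal_subring (rees_algebra D)"
    using normal_subring_poly[OF assms(2) Q] subring_set_rees_algebra
      rees_algebra_integrally_closed[OF assms(4)]
    by (rule normal_subring_if_integrally_closed)
  then show ?thesis
    by (simp add: normal_subring_def)
qed

end
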